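(* Assume the setting of the previous statements: $C\subseteq\mathbb{R}^n$ nonempty closed convex; $F$ continuously differentiable; $x^*$ a solution of VIP$(F,C)$; a neighborhood $X$ of $x^*$ and constants $L_1,L_2,\mu>0$ with $\|F(x)-F(y)\|\le L_1\|x-y\|$, $\|\nabla F(x)-\nabla F(y)\|\le L_2\|x-y\|$ for $x,y\in X$ and $\langle\nabla F(x)d,d\rangle\ge\mu\|d\|^2$ for $x\in X$, $d\in\mathbb{R}^n$; sequences $\{x_k\}\subset C$ with $x_k\to x^*$, $B_k$, $\mu_k>0$, $\rho_k\ge0$, $\delta_k>0$, inexact solutions $z_k\in C$ and exact solutions $\hat z_k$ of VIP$(\varphi_k,C)$; constants $D,C_1,C_2>0$ such that for all sufficiently large $k$: $\|B_k-\nabla F(x_k)\|\le D$; $\mu_k=O(r_k)$, $\mu_k\le C_1\|x_k-x^*\|$, $\rho_k\to0$; $B_k+\mu_kI$ positive definite with $(1+\|B_k+\mu_kI\|)/c_k\le C_2$; $\|(B_k-\nabla F(x_k))(z_k-x_k)\|\le\delta_k\|z_k-x_k\|$, $\mu_k<\mu/2$, $\delta_k\le\mu/16$. Assume moreover that $F$ is strongly monotone on $C$ with modulus $\mu$ and that $0<\alpha<2\mu$, and let $\gamma\in(0,1)$. Then there exist a constant $\delta$ with $0<\delta<\mu/16$ and a neighborhood $X'$ of $x^*$ such that for all sufficiently large $k$ with $x_k\in X'$ and $\delta_k\le\delta$, one has $f_\alpha(z_k)\le\gamma f_\alpha(x_k)$.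
   Context: VIP$(F,C)$: find $x^*\in C$ with $\langle F(x^* ),x-x^*\rangle\ge0$ for all $x\in C$. $P_C$ is the Euclidean projection onto $C$. $r_k=\|x_k-P_C(x_k-F(x_k))\|$. $F$ is strongly monotone on $C$ with modulus $\mu$ if $\langle F(x)-F(y),x-y\rangle\ge\mu\|x-y\|^2$ for all $x,y\in C$. For $\alpha>0$ the merit function is $f_\alpha(x)=\max_{y\in C}\{-\langle F(x),y-x\rangle-\tfrac{\alpha}{2}\|y-x\|^2\}$. For each $k$, $\varphi_k(z)=F(x_k)+(B_k+\mu_kI)(z-x_k)$; $\hat z_k\in C$ is the unique solution of VIP$(\varphi_k,C)$: $\langle\varphi_k(\hat z_k),x-\hat z_k\rangle\ge0$ for all $x\in C$. With $e_k=z_k-P_C(z_k-\varphi_k(z_k))$, the inexact solutions $z_k\in C$ satisfy $\|e_k\|\le\rho_k\mu_k\|z_k-x_k\|$ and $\langle e_k,\varphi_k(z_k)+z_k-x_k\rangle\le\rho_k\mu_k\|z_k-x_k\|^2$. $c_k$ is the smallest eigenvalue of the symmetric part of $B_k+\mu_kI$. *)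

theory Defs
  imports "HOL-Analysis.Analysis" "HOL-Library.Landau_Symbols"
begin

definition vip_sol :: "(real^'n \<Rightarrow> real^'n) \<Rightarrow> (real^'n) set \<Rightarrow> real^'n \<Rightarrow> bool" where
  "vip_sol F C x \<longleftrightarrow> x \<in> C \<and> (\<forall>y\<in>C. F x \<bullet> (y - x) \<ge> 0)"

abbreviation proj :: "(real^'n) set \<Rightarrow> real^'n \<Rightarrow> real^'n" where
  "proj C x \<equiv> closest_point C x"

definition resid :: "(real^'n \<Rightarrow> real^'n) \<Rightarrow> (real^'n) set \<Rightarrow> real^'n \<Rightarrow> real" where
  "resid F C x = norm (x - proj C (x - F x))"

definition strongly_monotone_on ::
  "(real^'n) set \<Rightarrow> (real^'n \<Rightarrow> real^'n) \<Rightarrow> real \<Rightarrow> bool" where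
  "strongly_monotone_on C F m \<longleftrightarrow>
     (\<forall>x\<in>C. \<forall>y\<in>C. (F x - F y) \<bullet> (x - y) \<ge> m * (norm (x - y))\<^sup>2)"

definition merit :: "real \<Rightarrow> (real^'n \<Rightarrow> real^'n) \<Rightarrow> (real^'n) set \<Rightarrow> real^'n \<Rightarrow> real" where
  "merit \<alpha> F C x = (SUP y\<in>C. - (F x \<bullet> (y - x)) - \<alpha> / 2 * (norm (y - x))\<^sup>2)"

definition mnorm :: "real^'n^'n \<Rightarrow> real" where
  "mnorm A = onorm (\<lambda>h. A *v h)"

definition pos_def :: "real^'n^'n \<Rightarrow> bool" where
  "pos_def A \<longleftrightarrow> (\<forall>v. v \<noteq> 0 \<longrightarrow> (A *v v) \<bullet> v > 0)"

definition sym_part :: "real^'n^'n \<Rightarrow> real^'n^'n" where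
  "sym_part A = (1/2) *\<^sub>R (A + transpose A)"

definition min_eig :: "real^'n^'n \<Rightarrow> real" where
  "min_eig S = Min {l. \<exists>v. v \<noteq> 0 \<and> S *v v = l *\<^sub>R v}"

definition lin_map ::
  "(real^'n \<Rightarrow> real^'n) \<Rightarrow> real^'n \<Rightarrow> real^'n^'n \<Rightarrow> real \<Rightarrow> real^'n \<Rightarrow> real^'n" where
  "lin_map F xk Bk muk z = F xk + (Bk + muk *\<^sub>R mat 1) *v (z - xk)"

end

theory Submission
  imports Defs
begin

(* Let s = norm (x_k - xstar) and t = norm (z_k - x_k). Strong monotonicity together with
   the VIP at xstar gives f_alpha(x_k) >= (mu - alpha/2) s^2. Testing the projection
   inequality for the residual e_k of z_k against xstar, and the VIP at xstar against the
   projected point z_k - e_k, yields the local error bound t <= K s, because B_k + mu_k I is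
   coercive with modulus 15 mu/16 on z_k - x_k. The projection inequality also bounds
   f_alpha(z_k) by (|F z_k| + |q|) |e_k| + |q|^2/(2 alpha) for q = F z_k - phi_k(z_k) + e_k,
   and a Taylor estimate gives |q| <= (L2 t + delta_k + mu_k + rho_k mu_k) t <= eps s once x_k
   is close to xstar and delta_k is small, while |e_k| <= rho_k C1 K s^2. With
   eps^2 = alpha gamma (mu - alpha/2) and rho_k small, f_alpha(z_k) <= gamma (mu - alpha/2) s^2. *)

lemma mnorm_bound: "norm (A *v h) \<le> mnorm A * norm (h::real^'n)"
  unfolding mnorm_def by (rule onorm) simp

lemma mnorm_nonneg: "0 \<le> mnorm (A::real^'n^'n)"
  unfolding mnorm_def by (rule onorm_pos_le) simp

lemma matrix_vector_mult_add_scaleR_mat: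
  "(B + m *\<^sub>R mat 1) *v (d::real^'n) = B *v d + m *\<^sub>R d"
  by (simp add: matrix_vector_mult_add_rdistrib scaleR_matrix_vector_assoc[symmetric])

lemma linear_minus_quadratic_le:
  fixes a t c :: real
  assumes "c > 0"
  shows "a * t - c / 2 * t\<^sup>2 \<le> a\<^sup>2 / (2 * c)"
proof -
  have "0 \<le> (a - c * t)\<^sup>2 / (2 * c)" using assms by simp
  also have "\<dots> = a\<^sup>2 / (2 * c) - (a * t - c / 2 * t\<^sup>2)"
    using assms by (simp add: field_simps power2_eq_square)
  finally show ?thesis by simp
qed

lemma quadratic_ineq_imp_le:
  fixes c t s P Q :: real
  assumes "c > 0" "t \<ge> 0" "s \<ge> 0" "P \<ge> 0" "Q \<ge> 0"
    and "c * t\<^sup>2 \<le> P * t * s + Q * s\<^sup>2"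
  shows "t \<le> max 1 ((P + Q) / c) * s"
proof (cases "t \<le> s")
  case True
  moreover have "1 * s \<le> max 1 ((P + Q) / c) * s"
    using \<open>s \<ge> 0\<close> by (intro mult_right_mono) auto
  ultimately show ?thesis by simp
next
  case False
  with assms have "Q * s\<^sup>2 \<le> Q * (t * s)"
    by (intro mult_left_mono) (auto simp: power2_eq_square intro: mult_right_mono)
  with assms have "c * t * t \<le> ((P + Q) * s) * t"
    by (simp add: power2_eq_square algebra_simps)
  then have "c * t \<le> (P + Q) * s"
    using False assms(3) by (simp add: mult_le_cancel_right)
  then have "t \<le> (P + Q) / c * s"
    using assms(1) by (simp add: field_simps)
  also have "\<dots> \<le> max 1 ((P + Q) / c) * s"
    using \<open>s \<ge> 0\<close> by (intro mult_right_mono) auto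
  finally show ?thesis .
qed

lemma perturbed_quadratic_ineq_imp_le:
  fixes c M L \<eta> t s :: real
  assumes "c > 0" "M \<ge> 0" "L \<ge> 0" "0 \<le> \<eta>" "\<eta> \<le> 1" "(M + 2) * \<eta> \<le> c / 2"
    and "t \<ge> 0" "s \<ge> 0"
    and "c * t\<^sup>2 \<le> M * t * (s + \<eta> * t) + (L * s + \<eta> * t) * (t + s + \<eta> * t)"
  shows "t \<le> max 1 (2 * (M + 3 * L + 1) / c) * s"
proof -
  have "\<eta> * \<eta> * t\<^sup>2 \<le> \<eta> * t\<^sup>2" "\<eta> * (L * t * s) \<le> L * t * s" "\<eta> * (t * s) \<le> t * s"
    using assms by (simp_all add: mult_left_le_one_le mult_right_mono)
  moreover have "(M + 2) * \<eta> * t\<^sup>2 \<le> c / 2 * t\<^sup>2"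
    using assms by (intro mult_right_mono) auto
  ultimately have "c / 2 * t\<^sup>2 \<le> (M + 2 * L + 1) * t * s + L * s\<^sup>2"
    using assms(9) by (simp add: algebra_simps power2_eq_square)
  from quadratic_ineq_imp_le[OF _ assms(7,8) _ _ this] assms show ?thesis
    by (simp add: field_simps)
qed

lemma inner_le_of_norm_le:
  fixes x y :: "'a::real_inner"
  assumes "norm x \<le> a" "norm y \<le> b"
  shows "x \<bullet> y \<le> a * b"
proof -
  have "x \<bullet> y \<le> norm x * norm y"
    by (rule norm_cauchy_schwarz)
  also have "\<dots> \<le> a * b"
    using assms by (intro mult_mono) (auto intro: order_trans[OF norm_ge_zero])
  finally show ?thesis .
qed

lemma proj_residual_inner_le:
  fixes z v y :: "real^'n"
  assumes "closed C" "convex C" "C \<noteq> {}" "y \<in> C"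
  shows "(z - proj C (z - v) - v) \<bullet> (y - proj C (z - v)) \<le> 0"
  using closest_point_dot[OF assms(2,1,4), of "z - v"] by (simp add: algebra_simps)

lemma merit_le:
  assumes "C \<noteq> {}" "\<And>y. y \<in> C \<Longrightarrow> - (F z \<bullet> (y - z)) - \<alpha> / 2 * (norm (y - z))\<^sup>2 \<le> b"
  shows "merit \<alpha> F C z \<le> b"
  unfolding merit_def using assms by (intro cSUP_least) auto

lemma merit_ge:
  assumes "y \<in> C" "\<alpha> > 0"
  shows "- (F x \<bullet> (y - x)) - \<alpha> / 2 * (norm (y - x))\<^sup>2 \<le> merit \<alpha> F C x"
  unfolding merit_def
proof (rule cSUP_upper[OF assms(1)])
  have "- (F x \<bullet> (y - x)) - \<alpha> / 2 * (norm (y - x))\<^sup>2 \<le> (norm (F x))\<^sup>2 / (2 * \<alpha>)" for y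
  proof -
    have "- (F x \<bullet> (y - x)) \<le> norm (F x) * norm (y - x)"
      by (metis Cauchy_Schwarz_ineq2 abs_le_iff inner_minus_left)
    then show ?thesis
      using linear_minus_quadratic_le[OF assms(2), of "norm (F x)" "norm (y - x)"] by linarith
  qed
  then show "bdd_above ((\<lambda>y. - (F x \<bullet> (y - x)) - \<alpha> / 2 * (norm (y - x))\<^sup>2) ` C)"
    by (intro bdd_aboveI2)
qed

lemma merit_ge_dist_sol:
  assumes "vip_sol F C xs" "strongly_monotone_on C F \<mu>" "x \<in> C" "\<alpha> > 0"
  shows "(\<mu> - \<alpha> / 2) * (norm (x - xs))\<^sup>2 \<le> merit \<alpha> F C x"
proof -
  have "xs \<in> C" "F xs \<bullet> (x - xs) \<ge> 0"
    using assms(1,3) unfolding vip_sol_def by auto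
  moreover have "(F x - F xs) \<bullet> (x - xs) \<ge> \<mu> * (norm (x - xs))\<^sup>2"
    using assms(2,3) \<open>xs \<in> C\<close> unfolding strongly_monotone_on_def by blast
  moreover have "- (F x \<bullet> (xs - x)) = (F x - F xs) \<bullet> (x - xs) + F xs \<bullet> (x - xs)"
    by (simp add: inner_diff_left inner_diff_right)
  ultimately show ?thesis
    using merit_ge[OF \<open>xs \<in> C\<close> assms(4), of F x]
    by (simp add: norm_minus_commute algebra_simps)
qed

lemma merit_le_residual:
  fixes F :: "real^'n \<Rightarrow> real^'n"
  assumes "closed C" "convex C" "C \<noteq> {}" "\<alpha> > 0"
    and e: "e = z - proj C (z - v)" and q: "q = F z - v + e"
  shows "merit \<alpha> F C z \<le> (norm (F z) + norm q) * norm e + (norm q)\<^sup>2 / (2 * \<alpha>)"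
proof (rule merit_le[OF assms(3)])
  fix y assume "y \<in> C"
  have "(e - v) \<bullet> (y - (z - e)) \<le> 0"
    using proj_residual_inner_le[OF assms(1-3) \<open>y \<in> C\<close>, of z v] e by simp
  then have "- (F z \<bullet> (y - z)) \<le> F z \<bullet> e - q \<bullet> e + q \<bullet> (z - y)"
    unfolding q by (simp add: inner_diff_right inner_diff_left inner_add_left algebra_simps)
  also have "\<dots> \<le> (norm (F z) + norm q) * norm e + norm q * norm (y - z)"
    using Cauchy_Schwarz_ineq2[of "F z" e] Cauchy_Schwarz_ineq2[of q e]
      Cauchy_Schwarz_ineq2[of q "z - y"]
    by (simp add: norm_minus_commute algebra_simps abs_le_iff)
  finally show "- (F z \<bullet> (y - z)) - \<alpha> / 2 * (norm (y - z))\<^sup>2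
      \<le> (norm (F z) + norm q) * norm e + (norm q)\<^sup>2 / (2 * \<alpha>)"
    using linear_minus_quadratic_le[OF assms(4), of "norm q" "norm (y - z)"] by linarith
qed

lemma dist_le_inexact_projection_step:
  fixes F :: "real^'n \<Rightarrow> real^'n"
  assumes "closed C" "convex C" "C \<noteq> {}" "vip_sol F C xs"
    and e: "e = z - proj C (z - (F x + g))"
    and coerc: "g \<bullet> (z - x) \<ge> c * (norm (z - x))\<^sup>2"
    and g: "norm g \<le> M * norm (z - x)"
    and en: "norm e \<le> \<eta> * norm (z - x)"
    and Fx: "norm (F x - F xs) \<le> L * norm (x - xs)"
    and "c > 0" "M \<ge> 0" "L \<ge> 0" "0 \<le> \<eta>" "\<eta> \<le> 1" "(M + 2) * \<eta> \<le> c / 2"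
  shows "norm (z - x) \<le> max 1 (2 * (M + 3 * L + 1) / c) * norm (x - xs)"
proof -
  define t s where "t = norm (z - x)" and "s = norm (x - xs)"
  have "xs \<in> C" and "z - e \<in> C"
    using assms(4) closest_point_in_set[OF assms(1,3)] unfolding vip_sol_def e by auto
  then have "F xs \<bullet> (z - e - xs) \<ge> 0"
    using assms(4) unfolding vip_sol_def by blast
  moreover have "(e - (F x + g)) \<bullet> (xs - (z - e)) \<le> 0"
    using proj_residual_inner_le[OF assms(1-3) \<open>xs \<in> C\<close>] e by simp
  ultimately have "g \<bullet> (z - x)
      \<le> (F xs - F x + e) \<bullet> ((z - x) + (x - xs) - e) + g \<bullet> (e - (x - xs))"
    by (simp add: inner_diff_left inner_diff_right inner_add_left inner_add_right algebra_simps)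
  also have "\<dots> \<le> (L * s + \<eta> * t) * (t + s + \<eta> * t) + M * t * (s + \<eta> * t)"
  proof (rule add_mono)
    have "norm (F xs - F x + e) \<le> L * s + \<eta> * t"
      using norm_triangle_ineq[of "F xs - F x" e] Fx en
      by (simp add: s_def t_def norm_minus_commute)
    moreover have "norm ((z - x) + (x - xs) - e) \<le> t + s + \<eta> * t"
      using norm_triangle_ineq4[of "(z - x) + (x - xs)" e] norm_triangle_ineq[of "z - x" "x - xs"]
        en
      by (simp add: s_def t_def)
    ultimately show "(F xs - F x + e) \<bullet> ((z - x) + (x - xs) - e)
        \<le> (L * s + \<eta> * t) * (t + s + \<eta> * t)"
      by (rule inner_le_of_norm_le)
    have "norm (e - (x - xs)) \<le> s + \<eta> * t"
      using norm_triangle_ineq4[of e "x - xs"] en by (simp add: s_def t_def)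
    then show "g \<bullet> (e - (x - xs)) \<le> M * t * (s + \<eta> * t)"
      using inner_le_of_norm_le[OF g] by (simp add: t_def)
  qed
  finally have "c * t\<^sup>2 \<le> M * t * (s + \<eta> * t) + (L * s + \<eta> * t) * (t + s + \<eta> * t)"
    using coerc by (simp add: t_def)
  from perturbed_quadratic_ineq_imp_le[OF assms(10-15) _ _ this] show ?thesis
    by (simp add: s_def t_def)
qed

lemma perturbed_matrix_inner_ge:
  fixes A B :: "real^'n^'n"
  assumes "(A *v d) \<bullet> d \<ge> \<mu> * (norm d)\<^sup>2" "norm ((B - A) *v d) \<le> \<delta> * norm d" "m \<ge> 0"
  shows "((B + m *\<^sub>R mat 1) *v d) \<bullet> d \<ge> (\<mu> - \<delta>) * (norm d)\<^sup>2"
proof -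
  have "((B - A) *v d) \<bullet> d \<ge> - (\<delta> * (norm d)\<^sup>2)"
    using Cauchy_Schwarz_ineq2[of "(B - A) *v d" d] mult_right_mono[OF assms(2) norm_ge_zero[of d]]
    by (simp add: power2_eq_square abs_le_iff)
  moreover have "(B + m *\<^sub>R mat 1) *v d = A *v d + (B - A) *v d + m *\<^sub>R d"
    by (simp add: matrix_vector_mult_add_scaleR_mat matrix_vector_mult_diff_rdistrib)
  moreover have "m * (norm d)\<^sup>2 \<ge> 0"
    using assms(3) by simp
  ultimately show ?thesis
    using assms(1) by (simp add: inner_add_left power2_norm_eq_inner algebra_simps)
qed

lemma perturbed_matrix_norm_le:
  fixes A B :: "real^'n^'n"
  assumes "norm (A *v d) \<le> a * norm d" "norm ((B - A) *v d) \<le> \<delta> * norm d" "m \<ge> 0"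
  shows "norm ((B + m *\<^sub>R mat 1) *v d) \<le> (a + \<delta> + m) * norm d"
proof -
  have "(B + m *\<^sub>R mat 1) *v d = A *v d + (B - A) *v d + m *\<^sub>R d"
    by (simp add: matrix_vector_mult_add_scaleR_mat matrix_vector_mult_diff_rdistrib)
  then have "norm ((B + m *\<^sub>R mat 1) *v d) \<le> norm (A *v d) + norm ((B - A) *v d) + m * norm d"
    using assms(3)
    by (metis abs_of_nonneg norm_scaleR norm_triangle_le norm_triangle_ineq add_mono order_refl)
  then show ?thesis
    using assms(1,2) by (simp add: algebra_simps)
qed

lemma linearization_error_le:
  fixes F :: "real^'n \<Rightarrow> real^'n"
  assumes deriv: "\<And>y. (F has_derivative (\<lambda>h. JF y *v h)) (at y)"
    and "convex S" "x \<in> S" "z \<in> S"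
    and lip: "\<And>y. y \<in> S \<Longrightarrow> mnorm (JF y - JF x) \<le> L * norm (y - x)" and "L \<ge> 0"
  shows "norm (F z - F x - JF x *v (z - x)) \<le> L * (norm (z - x))\<^sup>2"
proof -
  have "norm (F z - F x - (\<lambda>h. JF x *v h) (z - x)) \<le> norm (z - x) * (L * norm (z - x))"
  proof (rule differentiable_bound_linearization
      [where S="closed_segment x z" and f'="\<lambda>y h. JF y *v h"])
    show "x + \<tau> *\<^sub>R (z - x) \<in> closed_segment x z" if "\<tau> \<in> {0..1}" for \<tau>
      using that by (auto simp: closed_segment_def algebra_simps intro!: exI)
    show "(F has_derivative (\<lambda>h. JF y *v h)) (at y within closed_segment x z)" for y
      using deriv has_derivative_at_withinI by blast
    fix y assume y: "y \<in> closed_segment x z"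
    have "onorm ((\<lambda>h. JF y *v h) - (\<lambda>h. JF x *v h)) = mnorm (JF y - JF x)"
      unfolding mnorm_def
      by (rule arg_cong[where f=onorm]) (auto simp: fun_eq_iff matrix_vector_mult_diff_rdistrib)
    also have "\<dots> \<le> L * norm (y - x)"
      using lip y closed_segment_subset[OF assms(3,4,2)] by blast
    also have "\<dots> \<le> L * norm (z - x)"
      using dist_in_closed_segment[OF y] \<open>L \<ge> 0\<close>
      by (intro mult_left_mono) (auto simp: dist_norm norm_minus_commute)
    finally show "onorm ((\<lambda>h. JF y *v h) - (\<lambda>h. JF x *v h)) \<le> L * norm (z - x)" .
  qed simp
  then show ?thesis by (simp add: power2_eq_square mult_ac)
qed

lemma quadratic_estimate_le:
  fixes K L C1 Fb \<alpha> \<beta> \<epsilon> \<rho> s t dk m \<eta> :: real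
  assumes "K \<ge> 0" "L \<ge> 0" "C1 \<ge> 0" "Fb \<ge> 0" "\<alpha> > 0" "\<epsilon> \<ge> 0" "0 \<le> \<rho>" "\<rho> \<le> 1"
    and "0 \<le> s" "s \<le> 1" "0 \<le> t" "t \<le> K * s" "0 \<le> dk" "0 \<le> m" "m \<le> C1 * s"
    and "0 \<le> \<eta>" "\<eta> \<le> \<rho> * m"
    and small: "(L * K + 2 * C1) * K * s + dk * K \<le> \<epsilon>"
    and \<rho>: "\<rho> * ((Fb + \<epsilon>) * C1 * K) \<le> \<beta> / 2" and \<epsilon>: "\<epsilon>\<^sup>2 \<le> \<alpha> * \<beta>"
    and Q: "Q = (L * t + dk + m + \<eta>) * t"
  shows "(Fb + Q) * (\<eta> * t) + Q\<^sup>2 / (2 * \<alpha>) \<le> \<beta> * s\<^sup>2"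
proof -
  have "\<rho> * m \<le> m" "\<rho> * m \<le> \<rho> * (C1 * s)"
    using assms by (auto simp: mult_left_le_one_le mult_left_mono)
  then have "\<eta> \<le> m" "\<eta> \<le> \<rho> * (C1 * s)"
    using assms by linarith+
  have "L * t \<le> L * (K * s)"
    using assms by (intro mult_left_mono)
  then have "L * t + dk + m + \<eta> \<le> (L * K + 2 * C1) * s + dk"
    using assms \<open>\<eta> \<le> m\<close> by (simp add: algebra_simps)
  then have "Q \<le> ((L * K + 2 * C1) * s + dk) * (K * s)"
    unfolding Q using assms by (intro mult_mono) auto
  also have "\<dots> = ((L * K + 2 * C1) * K * s + dk * K) * s"
    by (simp add: algebra_simps)
  also have "\<dots> \<le> \<epsilon> * s"
    using small \<open>0 \<le> s\<close> by (rule mult_right_mono)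
  finally have Q_le: "Q \<le> \<epsilon> * s" .
  have "0 \<le> Q"
    using assms by (simp add: Q)
  moreover have "\<epsilon> * s \<le> \<epsilon>"
    using assms by (simp add: mult_right_le_one_le)
  ultimately have "Q \<le> \<epsilon>"
    using Q_le by linarith
  then have "(Fb + Q) * (\<eta> * t) \<le> (Fb + \<epsilon>) * (\<rho> * (C1 * s) * (K * s))"
    using assms \<open>\<eta> \<le> \<rho> * (C1 * s)\<close> by (intro mult_mono) auto
  also have "\<dots> = (\<rho> * ((Fb + \<epsilon>) * C1 * K)) * s\<^sup>2"
    by (simp add: power2_eq_square algebra_simps)
  also have "\<dots> \<le> \<beta> / 2 * s\<^sup>2"
    using \<rho> by (rule mult_right_mono) simp
  finally have "(Fb + Q) * (\<eta> * t) \<le> \<beta> / 2 * s\<^sup>2" .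
  moreover have "Q\<^sup>2 \<le> \<alpha> * \<beta> * s\<^sup>2"
  proof -
    have "Q\<^sup>2 \<le> (\<epsilon> * s)\<^sup>2"
      using Q_le \<open>0 \<le> Q\<close> by (rule power_mono)
    also have "\<dots> \<le> \<alpha> * \<beta> * s\<^sup>2"
      using \<epsilon> by (simp add: power_mult_distrib mult_right_mono)
    finally show ?thesis .
  qed
  then have "Q\<^sup>2 / (2 * \<alpha>) \<le> \<beta> / 2 * s\<^sup>2"
    using assms(5) by (simp add: field_simps)
  ultimately show ?thesis by simp
qed

lemma quadratic_estimate_small:
  fixes K L C1 Fb \<alpha> \<beta> :: real
  assumes "K > 0" "L \<ge> 0" "C1 > 0" "Fb \<ge> 0" "\<alpha> > 0" "\<beta> > 0"
  shows "\<exists>\<delta>>0. \<exists>r>0. \<exists>\<rho>>0. \<forall>s t dk m \<eta>.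
    0 \<le> s \<longrightarrow> s < r \<longrightarrow> 0 \<le> t \<longrightarrow> t \<le> K * s \<longrightarrow> 0 \<le> dk \<longrightarrow> dk \<le> \<delta> \<longrightarrow>
    0 \<le> m \<longrightarrow> m \<le> C1 * s \<longrightarrow> 0 \<le> \<eta> \<longrightarrow> \<eta> \<le> \<rho> * m \<longrightarrow>
    (Fb + (L * t + dk + m + \<eta>) * t) * (\<eta> * t) + ((L * t + dk + m + \<eta>) * t)\<^sup>2 / (2 * \<alpha>)
      \<le> \<beta> * s\<^sup>2"
proof -
  define \<epsilon> where "\<epsilon> = sqrt (\<alpha> * \<beta>)"
  define P where "P = (Fb + \<epsilon>) * C1 * K"
  define \<delta> where "\<delta> = \<epsilon> / (2 * K)"
  define r where "r = min 1 (\<epsilon> / (2 * K * (L * K + 2 * C1)))"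
  define \<rho> where "\<rho> = min 1 (\<beta> / (2 * P))"
  have \<epsilon>: "\<epsilon> > 0" "\<epsilon>\<^sup>2 = \<alpha> * \<beta>"
    using assms by (simp_all add: \<epsilon>_def)
  have LK: "L * K + 2 * C1 > 0"
    using assms by (simp add: add_nonneg_pos)
  have "P > 0"
    using assms \<epsilon> by (simp add: P_def add_nonneg_pos)
  have "0 < \<delta>" "0 < r" "0 < \<rho>"
    using assms \<epsilon> LK \<open>P > 0\<close> by (simp_all add: \<delta>_def r_def \<rho>_def)
  moreover have "\<rho> * P \<le> \<beta> / 2"
    using \<open>P > 0\<close> mult_right_mono[of \<rho> "\<beta> / (2 * P)" P] by (simp add: \<rho>_def)
  moreover have "(L * K + 2 * C1) * K * s + dk * K \<le> \<epsilon>" if "0 \<le> s" "s < r" "dk \<le> \<delta>" for s dk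
  proof -
    have "(L * K + 2 * C1) * K * s \<le> (L * K + 2 * C1) * K * (\<epsilon> / (2 * K * (L * K + 2 * C1)))"
      using that assms LK by (intro mult_left_mono) (auto simp: r_def)
    moreover have "dk * K \<le> \<delta> * K"
      using that assms by (simp add: mult_right_mono)
    ultimately show ?thesis
      using assms LK by (simp add: \<delta>_def)
  qed
  moreover have "r \<le> 1" "\<rho> \<le> 1"
    by (simp_all add: r_def \<rho>_def)
  ultimately have "(Fb + (L * t + dk + m + \<eta>) * t) * (\<eta> * t)
      + ((L * t + dk + m + \<eta>) * t)\<^sup>2 / (2 * \<alpha>) \<le> \<beta> * s\<^sup>2"
    if "0 \<le> s" "s < r" "0 \<le> t" "t \<le> K * s" "0 \<le> dk" "dk \<le> \<delta>" "0 \<le> m" "m \<le> C1 * s"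
      "0 \<le> \<eta>" "\<eta> \<le> \<rho> * m" for s t dk m \<eta>
    using quadratic_estimate_le[of K L C1 Fb \<alpha> \<epsilon> \<rho> s t dk m \<eta> \<beta>] that assms \<epsilon>
    by (simp add: P_def)
  with \<open>0 < \<delta>\<close> \<open>0 < r\<close> \<open>0 < \<rho>\<close> show ?thesis
    by blast
qed

locale vip_local_setting =
  fixes C :: "(real^'n) set" and F :: "real^'n \<Rightarrow> real^'n" and JF :: "real^'n \<Rightarrow> real^'n^'n"
    and xstar :: "real^'n" and R L1 L2 \<mu> :: real
  assumes C_closed: "closed C" and C_convex: "convex C" and C_ne: "C \<noteq> {}"
    and F_deriv: "\<And>x. (F has_derivative (\<lambda>h. JF x *v h)) (at x)"
    and sol: "vip_sol F C xstar"
    and F_smon: "strongly_monotone_on C F \<mu>"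
    and R_pos: "R > 0" and L1_pos: "L1 > 0" and L2_pos: "L2 > 0" and mu_pos: "\<mu> > 0"
    and F_lip: "\<And>x y. x \<in> ball xstar R \<Longrightarrow> y \<in> ball xstar R \<Longrightarrow>
      norm (F x - F y) \<le> L1 * norm (x - y)"
    and JF_lip: "\<And>x y. x \<in> ball xstar R \<Longrightarrow> y \<in> ball xstar R \<Longrightarrow>
      mnorm (JF x - JF y) \<le> L2 * norm (x - y)"
    and JF_coerc: "\<And>x d. x \<in> ball xstar R \<Longrightarrow> (JF x *v d) \<bullet> d \<ge> \<mu> * (norm d)\<^sup>2"
begin

text \<open>For \<open>m \<le> \<mu>/2\<close> and \<open>B\<close> within \<open>\<mu>/16\<close> of \<open>JF x\<close> along the step,
  \<open>step_matrix_bound\<close> bounds \<open>B + m I\<close> and \<open>15\<mu>/16\<close> is its coercivity modulus there.\<close>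
definition step_matrix_bound :: real where
  "step_matrix_bound = mnorm (JF xstar) + L2 * R + 9 / 16 * \<mu>"

definition step_tol :: real where
  "step_tol = min 1 (15 / 16 * \<mu> / (2 * (step_matrix_bound + 2)))"

definition step_ratio :: real where
  "step_ratio = max 1 (2 * (step_matrix_bound + 3 * L1 + 1) / (15 / 16 * \<mu>))"

lemma xstar_in_ball: "xstar \<in> ball xstar R"
  using R_pos by simp

lemma jacobian_apply_norm_le:
  assumes "x \<in> ball xstar R"
  shows "norm (JF x *v d) \<le> (mnorm (JF xstar) + L2 * R) * norm d"
proof -
  have "norm (JF x *v d) \<le> norm (JF xstar *v d) + norm ((JF x - JF xstar) *v d)"
    by (metis add_diff_cancel_left' matrix_vector_mult_diff_rdistrib norm_triangle_ineq4
        norm_triangle_sub)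
  also have "\<dots> \<le> mnorm (JF xstar) * norm d + mnorm (JF x - JF xstar) * norm d"
    by (intro add_mono mnorm_bound)
  also have "mnorm (JF x - JF xstar) \<le> L2 * R"
  proof -
    have "norm (x - xstar) \<le> R"
      using assms by (simp add: dist_norm norm_minus_commute)
    from mult_left_mono[OF this less_imp_le[OF L2_pos]] show ?thesis
      using JF_lip[OF assms xstar_in_ball] by linarith
  qed
  finally show ?thesis
    by (simp add: mult_right_mono distrib_right)
qed

lemma step_matrix_bound_nonneg: "0 \<le> step_matrix_bound"
  unfolding step_matrix_bound_def using mnorm_nonneg[of "JF xstar"] R_pos L2_pos mu_pos by simp

lemma step_tol_pos: "0 < step_tol"
  unfolding step_tol_def using step_matrix_bound_nonneg mu_pos by simp

lemma step_tol_le: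
  assumes "\<eta> \<le> step_tol"
  shows "\<eta> \<le> 1" "(step_matrix_bound + 2) * \<eta> \<le> 15 / 16 * \<mu> / 2"
proof -
  define M where "M = step_matrix_bound + 2"
  have "M > 0"
    using step_matrix_bound_nonneg by (simp add: M_def)
  have "\<eta> \<le> 15 / 16 * \<mu> / (2 * M)"
    using assms unfolding step_tol_def M_def by simp
  then have "M * \<eta> \<le> M * (15 / 16 * \<mu> / (2 * M))"
    using \<open>M > 0\<close> by (intro mult_left_mono) auto
  also have "\<dots> = 15 / 16 * \<mu> / 2"
    using \<open>M > 0\<close> by (simp add: field_simps)
  finally show "(step_matrix_bound + 2) * \<eta> \<le> 15 / 16 * \<mu> / 2"
    by (simp add: M_def)
  show "\<eta> \<le> 1"
    using assms unfolding step_tol_def by simp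
qed

lemma step_dist_le:
  assumes "xk \<in> ball xstar R" "0 \<le> m" "m \<le> \<mu> / 2"
    and dk: "norm ((B - JF xk) *v (zk - xk)) \<le> dk * norm (zk - xk)" "dk \<le> \<mu> / 16"
    and e: "norm (zk - proj C (zk - lin_map F xk B m zk)) \<le> \<eta> * norm (zk - xk)"
    and "0 \<le> \<eta>" "\<eta> \<le> step_tol"
  shows "norm (zk - xk) \<le> step_ratio * norm (xk - xstar)"
proof -
  define g where "g = (B + m *\<^sub>R mat 1) *v (zk - xk)"
  have "g \<bullet> (zk - xk) \<ge> (\<mu> - dk) * (norm (zk - xk))\<^sup>2"
    using perturbed_matrix_inner_ge[OF JF_coerc[OF assms(1)] dk(1) assms(2)] by (simp add: g_def)
  moreover have "(\<mu> - dk) * (norm (zk - xk))\<^sup>2 \<ge> 15 / 16 * \<mu> * (norm (zk - xk))\<^sup>2"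
    using dk(2) by (intro mult_right_mono) auto
  ultimately have coerc: "g \<bullet> (zk - xk) \<ge> 15 / 16 * \<mu> * (norm (zk - xk))\<^sup>2"
    by linarith
  have "norm g \<le> (mnorm (JF xstar) + L2 * R + dk + m) * norm (zk - xk)"
    using perturbed_matrix_norm_le[OF jacobian_apply_norm_le[OF assms(1)] dk(1) assms(2)]
    by (simp add: g_def)
  also have "\<dots> \<le> step_matrix_bound * norm (zk - xk)"
    using assms(3) dk(2) by (intro mult_right_mono) (auto simp: step_matrix_bound_def)
  finally have "norm g \<le> step_matrix_bound * norm (zk - xk)" .
  from dist_le_inexact_projection_step[OF C_closed C_convex C_ne sol _ coerc this _
      F_lip[OF assms(1) xstar_in_ball] _ step_matrix_bound_nonneg _ \<open>0 \<le> \<eta>\<close>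
      step_tol_le[OF \<open>\<eta> \<le> step_tol\<close>]]
  show ?thesis
    using e mu_pos L1_pos unfolding step_ratio_def lin_map_def g_def by simp
qed

lemma step_stays_near_sol:
  assumes near: "(step_ratio + 1) * norm (xk - xstar) < R" and "0 \<le> m" "m \<le> \<mu> / 2"
    and dk: "norm ((B - JF xk) *v (zk - xk)) \<le> dk * norm (zk - xk)" "dk \<le> \<mu> / 16"
    and e: "norm (zk - proj C (zk - lin_map F xk B m zk)) \<le> \<eta> * norm (zk - xk)"
    and "0 \<le> \<eta>" "\<eta> \<le> step_tol"
  shows "xk \<in> ball xstar R" "zk \<in> ball xstar R"
    and "norm (zk - xk) \<le> step_ratio * norm (xk - xstar)"
proof -
  have "norm (xk - xstar) \<le> (step_ratio + 1) * norm (xk - xstar)"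
    by (simp add: distrib_right step_ratio_def)
  then show xk: "xk \<in> ball xstar R"
    using near by (simp add: dist_norm norm_minus_commute)
  show dist: "norm (zk - xk) \<le> step_ratio * norm (xk - xstar)"
    using step_dist_le[OF xk assms(2-8)] .
  have "norm (zk - xstar) \<le> norm (zk - xk) + norm (xk - xstar)"
    using norm_triangle_ineq[of "zk - xk" "xk - xstar"] by simp
  then show "zk \<in> ball xstar R"
    using dist near by (simp add: dist_norm norm_minus_commute distrib_right)
qed


lemma F_norm_le:
  assumes "z \<in> ball xstar R"
  shows "norm (F z) \<le> norm (F xstar) + L1 * R"
proof -
  have "norm (z - xstar) \<le> R"
    using assms by (simp add: dist_norm norm_minus_commute)
  from mult_left_mono[OF this less_imp_le[OF L1_pos]] have "norm (F z - F xstar) \<le> L1 * R"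
    using F_lip[OF assms xstar_in_ball] by linarith
  then show ?thesis
    using norm_triangle_ineq2[of "F z" "F xstar"] by linarith
qed

lemma step_merit_le:
  assumes "xk \<in> ball xstar R" "zk \<in> ball xstar R" "0 \<le> m" "\<alpha> > 0"
    and dk: "norm ((B - JF xk) *v (zk - xk)) \<le> dk * norm (zk - xk)"
    and e: "norm (zk - proj C (zk - lin_map F xk B m zk)) \<le> \<eta> * norm (zk - xk)"
    and Q_def: "Q = (L2 * norm (zk - xk) + dk + m + \<eta>) * norm (zk - xk)"
  shows "merit \<alpha> F C zk
    \<le> (norm (F xstar) + L1 * R + Q) * (\<eta> * norm (zk - xk)) + Q\<^sup>2 / (2 * \<alpha>)"
proof -
  define d where "d = zk - xk"
  define e where "e = zk - proj C (zk - lin_map F xk B m zk)"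
  define q where "q = F zk - lin_map F xk B m zk + e"
  have "lin_map F xk B m zk = F xk + B *v d + m *\<^sub>R d"
    unfolding lin_map_def d_def matrix_vector_mult_add_scaleR_mat by simp
  then have q_eq: "q = (F zk - F xk - JF xk *v d) - (B - JF xk) *v d - m *\<^sub>R d + e"
    by (simp add: q_def matrix_vector_mult_diff_rdistrib algebra_simps)
  have "norm q \<le> norm (F zk - F xk - JF xk *v d) + norm ((B - JF xk) *v d)
      + norm (m *\<^sub>R d) + norm e"
    using norm_triangle_ineq[of "F zk - F xk - JF xk *v d - (B - JF xk) *v d - m *\<^sub>R d" e]
      norm_triangle_ineq4[of "F zk - F xk - JF xk *v d - (B - JF xk) *v d" "m *\<^sub>R d"]
      norm_triangle_ineq4[of "F zk - F xk - JF xk *v d" "(B - JF xk) *v d"]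
    unfolding q_eq by linarith
  moreover have "norm (F zk - F xk - JF xk *v d) \<le> L2 * (norm d)\<^sup>2"
    using linearization_error_le[OF F_deriv convex_ball assms(1,2) JF_lip[OF _ assms(1)]] L2_pos
    by (simp add: d_def)
  moreover have "norm (m *\<^sub>R d) = m * norm d"
    using assms(3) by simp
  ultimately have "norm q \<le> L2 * (norm d)\<^sup>2 + dk * norm d + m * norm d + \<eta> * norm d"
    using dk e unfolding d_def e_def by linarith
  then have q: "norm q \<le> Q"
    by (simp add: Q_def d_def power2_eq_square algebra_simps)
  have "merit \<alpha> F C zk \<le> (norm (F zk) + norm q) * norm e + (norm q)\<^sup>2 / (2 * \<alpha>)"
    by (rule merit_le_residual[where F=F and z=zk, OF C_closed C_convex C_ne assms(4) e_def q_def])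
  also have "\<dots> \<le> (norm (F xstar) + L1 * R + Q) * (\<eta> * norm (zk - xk)) + Q\<^sup>2 / (2 * \<alpha>)"
  proof (rule add_mono)
    have "0 \<le> norm (F xstar) + L1 * R + Q"
      using mult_pos_pos[OF L1_pos R_pos] norm_ge_zero[of "F xstar"] norm_ge_zero[of q] q
      by linarith
    then show "(norm (F zk) + norm q) * norm e
        \<le> (norm (F xstar) + L1 * R + Q) * (\<eta> * norm (zk - xk))"
      using F_norm_le[OF assms(2)] q e by (intro mult_mono) (auto simp: e_def)
    show "(norm q)\<^sup>2 / (2 * \<alpha>) \<le> Q\<^sup>2 / (2 * \<alpha>)"
      using q assms(4) by (intro divide_right_mono power_mono) auto
  qed
  finally show ?thesis .
qed

lemma merit_contraction_near_sol:
  fixes \<alpha> \<gamma> C1 :: real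
  assumes "0 < \<alpha>" "\<alpha> < 2 * \<mu>" "0 < \<gamma>" "0 < C1"
  shows "\<exists>\<delta>>0. \<delta> < \<mu> / 16 \<and> (\<exists>r>0. \<exists>\<rho>>0. \<forall>xk zk B m \<rho>k dk.
    xk \<in> C \<longrightarrow> norm (xk - xstar) < r \<longrightarrow> 0 \<le> m \<longrightarrow> m \<le> C1 * norm (xk - xstar) \<longrightarrow> m \<le> \<mu> / 2 \<longrightarrow>
    0 \<le> \<rho>k \<longrightarrow> \<rho>k < \<rho> \<longrightarrow> 0 \<le> dk \<longrightarrow> dk \<le> \<delta> \<longrightarrow>
    norm ((B - JF xk) *v (zk - xk)) \<le> dk * norm (zk - xk) \<longrightarrow>
    norm (zk - proj C (zk - lin_map F xk B m zk)) \<le> \<rho>k * m * norm (zk - xk) \<longrightarrow>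
    merit \<alpha> F C zk \<le> \<gamma> * merit \<alpha> F C xk)"
proof -
  define K where "K = step_ratio"
  define \<beta> where "\<beta> = \<gamma> * (\<mu> - \<alpha> / 2)"
  have K: "K \<ge> 1" and "\<beta> > 0"
    using assms by (simp_all add: K_def step_ratio_def \<beta>_def)
  have Fb: "0 \<le> norm (F xstar) + L1 * R"
    using L1_pos R_pos by simp
  from K have "K > 0"
    by simp
  from quadratic_estimate_small[OF this less_imp_le[OF L2_pos] assms(4) Fb assms(1) \<open>\<beta> > 0\<close>]
  obtain \<delta> r \<rho> where "\<delta> > 0" "r > 0" "\<rho> > 0" and est: "\<forall>s t dk m \<eta>.
    0 \<le> s \<longrightarrow> s < r \<longrightarrow> 0 \<le> t \<longrightarrow> t \<le> K * s \<longrightarrow> 0 \<le> dk \<longrightarrow> dk \<le> \<delta> \<longrightarrow>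
    0 \<le> m \<longrightarrow> m \<le> C1 * s \<longrightarrow> 0 \<le> \<eta> \<longrightarrow> \<eta> \<le> \<rho> * m \<longrightarrow>
    (norm (F xstar) + L1 * R + (L2 * t + dk + m + \<eta>) * t) * (\<eta> * t)
      + ((L2 * t + dk + m + \<eta>) * t)\<^sup>2 / (2 * \<alpha>) \<le> \<beta> * s\<^sup>2"
    by blast
  define \<delta>' r' \<rho>' where "\<delta>' = min \<delta> (\<mu> / 32)" and "r' = min r (R / (K + 1))"
    and "\<rho>' = min \<rho> (2 * step_tol / \<mu>)"
  have "0 < \<delta>'" "\<delta>' < \<mu> / 16" "0 < r'" "0 < \<rho>'"
    using \<open>\<delta> > 0\<close> \<open>r > 0\<close> \<open>\<rho> > 0\<close> K mu_pos R_pos step_tol_pos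
    by (simp_all add: \<delta>'_def r'_def \<rho>'_def)
  moreover have "merit \<alpha> F C zk \<le> \<gamma> * merit \<alpha> F C xk"
    if "xk \<in> C" "norm (xk - xstar) < r'" "0 \<le> m" "m \<le> C1 * norm (xk - xstar)" "m \<le> \<mu> / 2"
      "0 \<le> \<rho>k" "\<rho>k < \<rho>'" "0 \<le> dk" "dk \<le> \<delta>'"
      and dk: "norm ((B - JF xk) *v (zk - xk)) \<le> dk * norm (zk - xk)"
      and e: "norm (zk - proj C (zk - lin_map F xk B m zk)) \<le> \<rho>k * m * norm (zk - xk)"
    for xk zk B m \<rho>k dk
  proof -
    define s t where "s = norm (xk - xstar)" and "t = norm (zk - xk)"
    have "s < r" "s < R / (K + 1)"
      using that(2) by (simp_all add: s_def r'_def)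
    then have "(K + 1) * s < R"
      using K by (simp add: pos_less_divide_eq mult.commute)
    have "\<rho>k \<le> \<rho>" "\<rho>k \<le> 2 * step_tol / \<mu>"
      using that(7) by (simp_all add: \<rho>'_def)
    have "\<rho>k * m \<le> \<rho> * m"
      using \<open>\<rho>k \<le> \<rho>\<close> that(3) by (rule mult_right_mono)
    have "\<rho>k * m \<le> 2 * step_tol / \<mu> * (\<mu> / 2)"
      using \<open>\<rho>k \<le> 2 * step_tol / \<mu>\<close> that(5) step_tol_pos mu_pos that(3) by (intro mult_mono) auto
    then have "\<rho>k * m \<le> step_tol"
      using mu_pos by simp
    have "dk \<le> \<mu> / 16"
      using that(9) mu_pos by (simp add: \<delta>'_def)
    note near = step_stays_near_sol[OF _ that(3,5) dk this e mult_nonneg_nonneg[OF that(6,3)]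
        \<open>\<rho>k * m \<le> step_tol\<close>]
    have xk: "xk \<in> ball xstar R" and zk: "zk \<in> ball xstar R" and "t \<le> K * s"
      using near \<open>(K + 1) * s < R\<close> by (simp_all add: K_def s_def t_def)
    have "merit \<alpha> F C zk \<le> (norm (F xstar) + L1 * R + (L2 * t + dk + m + \<rho>k * m) * t)
        * (\<rho>k * m * t) + ((L2 * t + dk + m + \<rho>k * m) * t)\<^sup>2 / (2 * \<alpha>)"
      using step_merit_le[OF xk zk that(3) assms(1) dk e refl] by (simp only: t_def)
    also have "\<dots> \<le> \<beta> * s\<^sup>2"
      using \<open>s < r\<close> \<open>t \<le> K * s\<close> \<open>\<rho>k * m \<le> \<rho> * m\<close> that(3,4,6,8,9)
      by (intro est[rule_format]) (auto simp: s_def t_def \<delta>'_def)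
    also have "\<dots> \<le> \<gamma> * merit \<alpha> F C xk"
      using mult_left_mono[OF merit_ge_dist_sol[OF sol F_smon that(1) assms(1)]] assms(3)
      by (simp add: \<beta>_def s_def mult.assoc)
    finally show ?thesis .
  qed
  ultimately show ?thesis by blast
qed

end


theorem mainTheorem6:
  fixes C :: "(real^'n) set"
    and F :: "real^'n \<Rightarrow> real^'n"
    and JF :: "real^'n \<Rightarrow> real^'n^'n"
    and xstar :: "real^'n"
    and X :: "(real^'n) set"
    and L1 L2 \<mu> D C1 C2 \<alpha> \<gamma> :: real
    and x z zhat :: "nat \<Rightarrow> real^'n"
    and B :: "nat \<Rightarrow> real^'n^'n"
    and mu rho dlt :: "nat \<Rightarrow> real"
  assumes C_ne: "C \<noteq> {}" and C_closed: "closed C" and C_convex: "convex C"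
    and F_deriv: "\<And>x. (F has_derivative (\<lambda>h. JF x *v h)) (at x)"
    and JF_cont: "continuous_on UNIV JF"
    and sol: "vip_sol F C xstar"
    and X_open: "open X" and X_xstar: "xstar \<in> X"
    and L1_pos: "L1 > 0" and L2_pos: "L2 > 0" and mu_pos: "\<mu> > 0"
    and F_lip: "\<And>x y. x \<in> X \<Longrightarrow> y \<in> X \<Longrightarrow> norm (F x - F y) \<le> L1 * norm (x - y)"
    and JF_lip: "\<And>x y. x \<in> X \<Longrightarrow> y \<in> X \<Longrightarrow> mnorm (JF x - JF y) \<le> L2 * norm (x - y)"
    and JF_coerc: "\<And>x d. x \<in> X \<Longrightarrow> (JF x *v d) \<bullet> d \<ge> \<mu> * (norm d)\<^sup>2"
    and x_in_C: "\<And>k. x k \<in> C"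
    and x_lim: "x \<longlonglongrightarrow> xstar"
    and muk_pos: "\<And>k. mu k > 0"
    and rho_nonneg: "\<And>k. rho k \<ge> 0"
    and dlt_pos: "\<And>k. dlt k > 0"
    and z_in_C: "\<And>k. z k \<in> C"
    and z_inexact1: "\<And>k. norm (z k - proj C (z k - lin_map F (x k) (B k) (mu k) (z k)))
                        \<le> rho k * mu k * norm (z k - x k)"
    and z_inexact2: "\<And>k. (z k - proj C (z k - lin_map F (x k) (B k) (mu k) (z k)))
                        \<bullet> (lin_map F (x k) (B k) (mu k) (z k) + z k - x k)
                        \<le> rho k * mu k * (norm (z k - x k))\<^sup>2"
    and zhat_sol: "\<And>k. vip_sol (lin_map F (x k) (B k) (mu k)) C (zhat k)"
    and D_pos: "D > 0" and C1_pos: "C1 > 0" and C2_pos: "C2 > 0"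
    and mu_bigO: "mu \<in> O(\<lambda>k. resid F C (x k))"
    and rho_lim: "rho \<longlonglongrightarrow> 0"
    and eventually_conds: "\<exists>K. \<forall>k\<ge>K.
          mnorm (B k - JF (x k)) \<le> D
        \<and> mu k \<le> C1 * norm (x k - xstar)
        \<and> pos_def (B k + mu k *\<^sub>R mat 1)
        \<and> (1 + mnorm (B k + mu k *\<^sub>R mat 1)) / min_eig (sym_part (B k + mu k *\<^sub>R mat 1)) \<le> C2
        \<and> norm ((B k - JF (x k)) *v (z k - x k)) \<le> dlt k * norm (z k - x k)
        \<and> mu k < \<mu> / 2
        \<and> dlt k \<le> \<mu> / 16"
    and F_smon: "strongly_monotone_on C F \<mu>"
    and alpha_pos: "0 < \<alpha>" and alpha_lt: "\<alpha> < 2 * \<mu>"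
    and gamma_pos: "0 < \<gamma>" and gamma_lt1: "\<gamma> < 1"
  shows "\<exists>\<delta>. 0 < \<delta> \<and> \<delta> < \<mu> / 16 \<and>
           (\<exists>X'. open X' \<and> xstar \<in> X' \<and>
              (\<exists>K. \<forall>k\<ge>K. x k \<in> X' \<and> dlt k \<le> \<delta> \<longrightarrow>
                   merit \<alpha> F C (z k) \<le> \<gamma> * merit \<alpha> F C (x k)))"
proof -
  (* Only the first inexactness condition and the eventual bounds on mu k, dlt k and rho k
     enter. *)
  obtain R where "R > 0" and RX: "ball xstar R \<subseteq> X"
    using X_open X_xstar open_contains_ball by blast
  interpret vip_local_setting C F JF xstar R L1 L2 \<mu>
    using C_closed C_convex C_ne F_deriv sol F_smon \<open>R > 0\<close> L1_pos L2_pos mu_pos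
      F_lip JF_lip JF_coerc RX
    by unfold_locales blast+
  obtain \<delta> r \<rho> where "0 < \<delta>" "\<delta> < \<mu> / 16" "0 < r" "0 < \<rho>" and step: "\<forall>xk zk B m \<rho>k dk.
    xk \<in> C \<longrightarrow> norm (xk - xstar) < r \<longrightarrow> 0 \<le> m \<longrightarrow> m \<le> C1 * norm (xk - xstar) \<longrightarrow> m \<le> \<mu> / 2 \<longrightarrow>
    0 \<le> \<rho>k \<longrightarrow> \<rho>k < \<rho> \<longrightarrow> 0 \<le> dk \<longrightarrow> dk \<le> \<delta> \<longrightarrow>
    norm ((B - JF xk) *v (zk - xk)) \<le> dk * norm (zk - xk) \<longrightarrow>
    norm (zk - proj C (zk - lin_map F xk B m zk)) \<le> \<rho>k * m * norm (zk - xk) \<longrightarrow>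
    merit \<alpha> F C zk \<le> \<gamma> * merit \<alpha> F C xk"
    using merit_contraction_near_sol[OF alpha_pos alpha_lt gamma_pos C1_pos] by blast
  obtain K1 where K1: "\<And>k. k \<ge> K1 \<Longrightarrow> mu k \<le> C1 * norm (x k - xstar) \<and> mu k < \<mu> / 2
      \<and> norm ((B k - JF (x k)) *v (z k - x k)) \<le> dlt k * norm (z k - x k)"
    using eventually_conds by blast
  obtain N where N: "\<And>k. k \<ge> N \<Longrightarrow> rho k < \<rho>"
    using order_tendstoD(2)[OF rho_lim \<open>0 < \<rho>\<close>] by (auto simp: eventually_sequentially)
  have "merit \<alpha> F C (z k) \<le> \<gamma> * merit \<alpha> F C (x k)"
    if "k \<ge> max K1 N" "x k \<in> ball xstar r" "dlt k \<le> \<delta>" for k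
    using step[rule_format, OF x_in_C[of k] _ less_imp_le[OF muk_pos[of k]] _ _ rho_nonneg[of k]
        N less_imp_le[OF dlt_pos[of k]] \<open>dlt k \<le> \<delta>\<close> _ z_inexact1[of k]] K1[of k] that
    by (simp add: dist_norm norm_minus_commute)
  then show ?thesis
    using \<open>0 < \<delta>\<close> \<open>\<delta> < \<mu> / 16\<close> \<open>0 < r\<close>
    by (intro exI[of _ \<delta>] conjI exI[of _ "ball xstar r"] exI[of _ "max K1 N"] allI impI) auto
qed

end
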